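(* Let $(G,\varphi)$ be a complex unit gain graph, let $u$ be a cut vertex of $G$, and let $H$ be a connected component of $G-u$. If $r(H,\varphi)=r(H+u,\varphi)$, then $r(G,\varphi)=r(H,\varphi)+r(G-V(H),\varphi)$.
   Context: A complex unit gain graph $(G,\varphi)$ is a simple finite graph $G$ with a gain function $\varphi$ assigning to each oriented edge $e_{ij}$ a complex number of modulus $1$ with $\varphi(e_{ji})=\overline{\varphi(e_{ij})}$. Its adjacency matrix $A(G,\varphi)$ has $(i,j)$-entry $\varphi(e_{ij})$ if $v_i,v_j$ are adjacent and $0$ otherwise; $r(G,\varphi)$ is its rank. For an induced subgraph $K$ of $G$, $(K,\varphi)$ denotes $K$ with the restriction of $\varphi$. $H+u$ denotes the subgraph of $G$ induced by $V(H)\cup\{u\}$, and $G-V(H)$ is obtained from $G$ by deleting all vertices of $H$ (so it contains $u$). *)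

theory Defs
  imports Complex_Main "HOL-Library.Function_Algebras"
begin

definition simple_graph :: "'a set \<Rightarrow> ('a \<Rightarrow> 'a \<Rightarrow> bool) \<Rightarrow> bool" where
  "simple_graph V E \<longleftrightarrow> finite V \<and> (\<forall>x y. E x y \<longrightarrow> x \<in> V \<and> y \<in> V)
     \<and> (\<forall>x y. E x y \<longrightarrow> E y x) \<and> (\<forall>x. \<not> E x x)"

definition unit_gain_graph ::
  "'a set \<Rightarrow> ('a \<Rightarrow> 'a \<Rightarrow> bool) \<Rightarrow> ('a \<Rightarrow> 'a \<Rightarrow> complex) \<Rightarrow> bool" where
  "unit_gain_graph V E phi \<longleftrightarrow> simple_graph V E
     \<and> (\<forall>x y. E x y \<longrightarrow> cmod (phi x y) = 1 \<and> phi y x = cnj (phi x y))"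

definition gain_adj ::
  "('a \<Rightarrow> 'a \<Rightarrow> bool) \<Rightarrow> ('a \<Rightarrow> 'a \<Rightarrow> complex) \<Rightarrow> 'a set \<Rightarrow> 'a \<Rightarrow> 'a \<Rightarrow> complex" where
  "gain_adj E phi S i j = (if i \<in> S \<and> j \<in> S \<and> E i j then phi i j else 0)"

definition gain_rank ::
  "('a \<Rightarrow> 'a \<Rightarrow> bool) \<Rightarrow> ('a \<Rightarrow> 'a \<Rightarrow> complex) \<Rightarrow> 'a set \<Rightarrow> nat" where
  "gain_rank E phi S =
     vector_space.dim (\<lambda>(c::complex) (f::'a \<Rightarrow> complex). (\<lambda>x. c * f x))
       ((\<lambda>i. gain_adj E phi S i) ` S)"

definition reach_in :: "('a \<Rightarrow> 'a \<Rightarrow> bool) \<Rightarrow> 'a set \<Rightarrow> 'a \<Rightarrow> 'a \<Rightarrow> bool" where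
  "reach_in E S = (\<lambda>x y. x \<in> S \<and> y \<in> S \<and> E x y)\<^sup>*\<^sup>*"

definition components :: "('a \<Rightarrow> 'a \<Rightarrow> bool) \<Rightarrow> 'a set \<Rightarrow> 'a set set" where
  "components E S = {C. \<exists>x\<in>S. C = {y. reach_in E S x y}}"

definition cut_vertex :: "'a set \<Rightarrow> ('a \<Rightarrow> 'a \<Rightarrow> bool) \<Rightarrow> 'a \<Rightarrow> bool" where
  "cut_vertex V E u \<longleftrightarrow> u \<in> V \<and> card (components E (V - {u})) > card (components E V)"

end

theory Submission
  imports Defs "HOL-Library.Indicator_Function"
begin

text \<open>
  View the rows of the adjacency matrices as functions on the vertices. In G, the row of a
  vertex of H is supported on H + u, the row of a vertex outside H + u equals its row in
  G - V(H), and the row of u is \<open>\<rho> + w\<close> with \<open>\<rho>\<close> its row in H + u and \<open>w\<close>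
  its row in G - V(H). Let U be the span of the rows in G of the vertices of H. The hypothesis
  r(H) = r(H + u) forces \<open>\<rho> \<in> U\<close>, and it keeps the indicator of u out of U (otherwise
  restricting these rows to H would lose a dimension). As the rows of G - V(H) vanish on H,
  the latter makes U meet the row space of G - V(H) trivially, and the former lets \<open>\<rho>\<close>
  be cancelled from the row of u; so the row space of G is the direct sum of U and the row
  space of G - V(H).
\<close>

text \<open>The space of functions used below is infinite dimensional in general, so the library's
  \<open>dim_insert\<close> and \<open>dim_mono\<close>, which live in finite-dimensional spaces, are replaced by
  versions for finite sets of vectors.\<close>

context vector_space begin

lemma dim_insert_finite:
  assumes "finite S"
  shows "dim (insert x S) = (if x \<in> span S then dim S else Suc (dim S))"
proof (cases "x \<in> span S")
  case True
  then show ?thesis using span_eq_dim[OF span_redundant[OF True]] by simp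
next
  case False
  obtain B where B: "B \<subseteq> S" "independent B" "S \<subseteq> span B" "card B = dim S"
    using basis_exists by blast
  have "finite B" using B(1) assms finite_subset by blast
  have "span B = span S"
    using span_mono[OF B(1)] span_minimal[OF B(3) subspace_span] by (rule antisym)
  have "dim (insert x S) = card (insert x B)"
  proof (rule dim_unique)
    show "insert x B \<subseteq> insert x S" using B(1) by blast
    show "insert x S \<subseteq> span (insert x B)"
      using B(3) span_mono[of B "insert x B"] span_base[of x "insert x B"] by blast
    show "independent (insert x B)"
      using False B(2) \<open>span B = span S\<close> by (simp add: independent_insertI)
  qed simp
  also have "\<dots> = Suc (dim S)"
  proof -
    have "x \<notin> B" using False B(1) span_base by blast
    then show ?thesis using \<open>finite B\<close> B(4) by simp
  qed
  finally show ?thesis using False by simp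
qed

lemma dim_mono_finite:
  assumes "finite W" "V \<subseteq> span W"
  shows "dim V \<le> dim W"
proof -
  obtain B where B: "B \<subseteq> W" "independent B" "W \<subseteq> span B" "card B = dim W"
    using basis_exists by blast
  have "V \<subseteq> span B"
    using assms(2) B(3) span_mono span_span by (metis order_trans)
  then show ?thesis
    using dim_le_card B(1,4) assms(1) finite_subset by metis
qed

lemma dim_image_le_finite:
  assumes "finite S" "Vector_Spaces.linear scale scale f"
  shows "dim (f ` S) \<le> dim S"
proof -
  interpret f: module_hom scale scale f
    using assms(2) by (simp add: module_hom_iff_linear)
  obtain B where B: "B \<subseteq> S" "independent B" "S \<subseteq> span B" "card B = dim S"
    using basis_exists by blast
  have "finite B" using B(1) assms(1) finite_subset by blast
  have "dim (f ` S) \<le> card (f ` B)"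
    using B(3) \<open>finite B\<close> by (intro dim_le_card f.spans_image) auto
  also have "\<dots> \<le> dim S" using B(4) \<open>finite B\<close> card_image_le by metis
  finally show ?thesis .
qed

lemma dim_Un_eq_add:
  assumes "finite T" "finite S" "span S \<inter> span T \<subseteq> {0}"
  shows "dim (S \<union> T) = dim S + dim T"
  using assms
proof (induction T rule: finite_induct)
  case empty
  then show ?case using dim_le_card'[of "{}"] by simp
next
  case (insert t T)
  have span_T: "span T \<subseteq> span (insert t T)" by (rule span_mono) blast
  have IH: "dim (S \<union> T) = dim S + dim T"
    using insert.IH insert.prems span_T by blast
  have "t \<in> span (S \<union> T) \<longleftrightarrow> t \<in> span T"
  proof
    assume "t \<in> span (S \<union> T)"
    then obtain s t' where st: "s \<in> span S" "t' \<in> span T" "t = s + t'"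
      using span_Un by blast
    have "s = t - t'" using st(3) by simp
    also have "\<dots> \<in> span (insert t T)"
      using span_diff[OF span_base[OF insertI1]] st(2) span_T by blast
    finally have "s = 0" using st(1) insert.prems(2) by blast
    then show "t \<in> span T" using st by simp
  next
    assume "t \<in> span T"
    then show "t \<in> span (S \<union> T)" using span_mono[of T "S \<union> T"] by blast
  qed
  then show ?case
    using IH insert.prems(1) insert.hyps(1) by (simp add: dim_insert_finite)
qed

lemma dim_insert_add_Un:
  assumes "finite U" "finite W" "x \<in> span U" "span U \<inter> span (insert y W) \<subseteq> {0}"
  shows "dim (insert (x + y) (U \<union> W)) = dim U + dim (insert y W)"
proof -
  let ?A = "insert (x + y) (U \<union> W)" and ?B = "U \<union> insert y W"
  have "x \<in> span ?A" "x \<in> span ?B"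
    using assms(3) span_mono[of U ?A] span_mono[of U ?B] by auto
  moreover have "x + y \<in> span ?A" "y \<in> span ?B" by (simp_all add: span_base)
  ultimately have "y \<in> span ?A" "x + y \<in> span ?B"
    using span_diff[of "x + y" ?A x] span_add[of x ?B y] by auto
  then have "?A \<subseteq> span ?B" "?B \<subseteq> span ?A"
    using span_base[where S = ?A] span_base[where S = ?B] by auto
  then have "span ?A = span ?B" by (simp add: span_eq)
  then have "dim ?A = dim ?B" by (rule span_eq_dim)
  also have "\<dots> = dim U + dim (insert y W)"
    using assms by (intro dim_Un_eq_add) auto
  finally show ?thesis .
qed

end

definition restrict_zero :: "'b set \<Rightarrow> ('b \<Rightarrow> 'f::zero) \<Rightarrow> 'b \<Rightarrow> 'f" where
  "restrict_zero K g j = (if j \<in> K then g j else 0)"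

interpretation pointwise: vector_space "\<lambda>(c::'f::field) (g::'b \<Rightarrow> 'f) x. c * g x"
  by unfold_locales (auto simp: fun_eq_iff algebra_simps)

lemma pointwise_span_vanishes:
  assumes "f \<in> pointwise.span S" "\<And>g. g \<in> S \<Longrightarrow> g x = 0"
  shows "f x = 0"
  using assms(1) by (induction rule: pointwise.span_induct_alt) (auto simp: assms(2))

lemma linear_restrict_zero:
  "Vector_Spaces.linear (\<lambda>(c::'f::field) (g::'b \<Rightarrow> 'f) x. c * g x) (\<lambda>c g x. c * g x)
     (restrict_zero K)"
  unfolding Vector_Spaces.linear_iff restrict_zero_def
  by (auto simp: pointwise.vector_space_axioms fun_eq_iff)

lemma indicator_notin_pointwise_span:
  fixes U :: "('b \<Rightarrow> 'f::field) set"
  assumes "finite U" "u \<notin> K"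
    and support: "\<And>g j. g \<in> U \<Longrightarrow> j \<notin> K \<Longrightarrow> j \<noteq> u \<Longrightarrow> g j = 0"
    and dim: "pointwise.dim U \<le> pointwise.dim (restrict_zero K ` U)"
  shows "indicator {u} \<notin> pointwise.span U"
proof
  assume u_in: "indicator {u} \<in> pointwise.span U"
  have "restrict_zero K g \<in> pointwise.span U" if "g \<in> U" for g
  proof -
    have "restrict_zero K g = g - (\<lambda>j. g u * indicator {u} j)"
      using support[OF that] assms(2) by (auto simp: restrict_zero_def indicator_def fun_eq_iff)
    then show ?thesis
      using pointwise.span_diff pointwise.span_base pointwise.span_scale u_in that by metis
  qed
  then have "insert (indicator {u}) (restrict_zero K ` U) \<subseteq> pointwise.span U"
    using u_in by auto
  then have "pointwise.dim (insert (indicator {u}) (restrict_zero K ` U)) \<le> pointwise.dim U"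
    using pointwise.dim_mono_finite assms(1) by blast
  moreover have "indicator {u} \<notin> pointwise.span (restrict_zero K ` U)"
  proof
    assume "indicator {u} \<in> pointwise.span (restrict_zero K ` U)"
    then have "(indicator {u} u :: 'f) = 0"
      by (rule pointwise_span_vanishes) (auto simp: restrict_zero_def \<open>u \<notin> K\<close>)
    then show False by simp
  qed
  ultimately show False
    using dim pointwise.dim_insert_finite[of "restrict_zero K ` U"] assms(1) by simp
qed

lemma pointwise_span_Int_trivial:
  fixes U W :: "('b \<Rightarrow> 'f::field) set"
  assumes "indicator {u} \<notin> pointwise.span U"
    and "\<And>g j. g \<in> U \<Longrightarrow> j \<notin> K \<Longrightarrow> j \<noteq> u \<Longrightarrow> g j = 0"
    and "\<And>g j. g \<in> W \<Longrightarrow> j \<in> K \<Longrightarrow> g j = 0"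
  shows "pointwise.span U \<inter> pointwise.span W \<subseteq> {0}"
proof
  fix f assume f: "f \<in> pointwise.span U \<inter> pointwise.span W"
  have "f j = 0" if "j \<noteq> u" for j
  proof (cases "j \<in> K")
    case True
    then show ?thesis using f assms(3) by (auto intro: pointwise_span_vanishes)
  next
    case False
    then show ?thesis using f assms(2) that by (auto intro: pointwise_span_vanishes)
  qed
  then have f_eq: "f = (\<lambda>j. f u * indicator {u} j)" by (auto simp: indicator_def fun_eq_iff)
  show "f \<in> {0}"
  proof (cases "f u = 0")
    case True
    then show ?thesis by (subst f_eq) auto
  next
    case False
    have "(\<lambda>j. inverse (f u) * f j) \<in> pointwise.span U"
      using f pointwise.span_scale by blast
    moreover have "(\<lambda>j. inverse (f u) * f j) = indicator {u}"
      using False by (subst f_eq) (auto simp: fun_eq_iff)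
    ultimately show ?thesis using assms(1) by simp
  qed
qed

lemma components_subset: "C \<in> components E S \<Longrightarrow> C \<subseteq> S"
proof
  fix y assume "C \<in> components E S" "y \<in> C"
  then obtain x where "reach_in E S x y" "x \<in> S"
    by (auto simp: components_def)
  then show "y \<in> S"
    unfolding reach_in_def by (induction rule: rtranclp_induct) auto
qed

lemma components_edge_closed:
  assumes "C \<in> components E S" "x \<in> C" "E x y" "y \<in> S"
  shows "y \<in> C"
proof -
  obtain x0 where C: "C = {z. reach_in E S x0 z}"
    using assms(1) by (auto simp: components_def)
  have "x \<in> S" using components_subset assms(1,2) by blast
  then have "reach_in E S x0 y"
    using assms(2-4) C unfolding reach_in_def by (auto intro: rtranclp.rtrancl_into_rtrancl)
  then show ?thesis using C by simp
qed

lemma gain_adj_restrict: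
  "T \<subseteq> S \<Longrightarrow> i \<in> T \<Longrightarrow> gain_adj E phi T i = restrict_zero T (gain_adj E phi S i)"
  by (auto simp: gain_adj_def restrict_zero_def fun_eq_iff)

lemma gain_adj_subset_eq:
  assumes "T \<subseteq> S" "i \<in> T" "\<And>j. E i j \<Longrightarrow> j \<in> S \<Longrightarrow> j \<in> T"
  shows "gain_adj E phi S i = gain_adj E phi T i"
  using assms by (auto simp: gain_adj_def fun_eq_iff)

lemma gain_adj_Un:
  assumes "A \<inter> B = {i}" "\<not> E i i"
  shows "gain_adj E phi (A \<union> B) i = gain_adj E phi A i + gain_adj E phi B i"
  using assms by (auto simp: gain_adj_def fun_eq_iff)

lemma gain_rank_split:
  assumes G: "simple_graph V E" and "K \<subseteq> V" "u \<in> V" "u \<notin> K"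
    and nbrs: "\<And>k j. k \<in> K \<Longrightarrow> E k j \<Longrightarrow> j \<in> K \<or> j = u"
    and rank: "gain_rank E phi K = gain_rank E phi (K \<union> {u})"
  shows "gain_rank E phi V = gain_rank E phi K + gain_rank E phi (V - K)"
proof -
  have "finite V" and sym: "\<And>x y. E x y \<Longrightarrow> E y x" and "\<not> E u u"
    using G by (auto simp: simple_graph_def)
  define U where "U = gain_adj E phi (K \<union> {u}) ` K"
  define W where "W = gain_adj E phi (V - K) ` (V - K - {u})"
  define \<rho> where "\<rho> = gain_adj E phi (K \<union> {u}) u"
  define w where "w = gain_adj E phi (V - K) u"
  have fin: "finite U" "finite W"
    using \<open>finite V\<close> \<open>K \<subseteq> V\<close> finite_subset unfolding U_def W_def by auto
  have "gain_adj E phi V ` K = U"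
    unfolding U_def using nbrs assms(2,3) by (intro image_cong refl gain_adj_subset_eq) auto
  moreover have "gain_adj E phi V ` (V - K - {u}) = W"
    unfolding W_def using nbrs sym by (intro image_cong refl gain_adj_subset_eq) blast+
  moreover have "gain_adj E phi V u = \<rho> + w"
    using gain_adj_Un[of "K \<union> {u}" "V - K" u E phi] assms(2-4) \<open>\<not> E u u\<close>
    unfolding \<rho>_def w_def by (simp add: Un_absorb1 insert_absorb)
  moreover have "gain_adj E phi V ` V = gain_adj E phi V ` insert u (K \<union> (V - K - {u}))"
    using assms(2,3) by (intro arg_cong[where f = "image (gain_adj E phi V)"]) auto
  ultimately have rows_V: "gain_adj E phi V ` V = insert (\<rho> + w) (U \<union> W)"
    by (simp add: image_Un)
  have rows_Ku: "gain_adj E phi (K \<union> {u}) ` (K \<union> {u}) = insert \<rho> U"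
    unfolding U_def \<rho>_def by auto
  have rows_K: "gain_adj E phi K ` K = restrict_zero K ` U"
    unfolding U_def image_image by (intro image_cong refl gain_adj_restrict) auto
  have rows_VK: "gain_adj E phi (V - K) ` (V - K) = insert w W"
    using assms(3,4) unfolding W_def w_def by auto
  have "gain_rank E phi K \<le> pointwise.dim U"
    unfolding gain_rank_def rows_K
    by (rule pointwise.dim_image_le_finite[OF fin(1) linear_restrict_zero])
  moreover have "pointwise.dim U \<le> gain_rank E phi (K \<union> {u})"
    unfolding gain_rank_def rows_Ku
    by (intro pointwise.dim_mono_finite) (auto intro: pointwise.span_base simp: fin(1))
  ultimately have dim_U: "pointwise.dim U = gain_rank E phi K" and "\<rho> \<in> pointwise.span U"
    using rank pointwise.dim_insert_finite[OF fin(1), of \<rho>] rows_Ku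
    unfolding gain_rank_def by (auto split: if_splits)
  have "indicator {u} \<notin> pointwise.span U"
    using fin(1) assms(4) dim_U rows_K
    by (intro indicator_notin_pointwise_span) (auto simp: U_def gain_adj_def gain_rank_def)
  then have "pointwise.span U \<inter> pointwise.span (insert w W) \<subseteq> {0}"
    by (rule pointwise_span_Int_trivial[where K = K]) (auto simp: U_def W_def w_def gain_adj_def)
  then show ?thesis
    using pointwise.dim_insert_add_Un[OF fin \<open>\<rho> \<in> _\<close>] rows_V rows_VK dim_U
    unfolding gain_rank_def by simp
qed

theorem lemma4p1:
  fixes V :: "'a set" and E :: "'a \<Rightarrow> 'a \<Rightarrow> bool" and phi :: "'a \<Rightarrow> 'a \<Rightarrow> complex"
    and u :: 'a and H :: "'a set"
  assumes "unit_gain_graph V E phi"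
    and "cut_vertex V E u"
    and "H \<in> components E (V - {u})"
    and "gain_rank E phi H = gain_rank E phi (H \<union> {u})"
  shows "gain_rank E phi V = gain_rank E phi H + gain_rank E phi (V - H)"
proof (rule gain_rank_split)
  show G: "simple_graph V E" using assms(1) by (simp add: unit_gain_graph_def)
  show "u \<in> V" using assms(2) by (simp add: cut_vertex_def)
  show "H \<subseteq> V" "u \<notin> H" using components_subset[OF assms(3)] by auto
  show "j \<in> H \<or> j = u" if "h \<in> H" "E h j" for h j
    using components_edge_closed[OF assms(3) that] that(2) G by (auto simp: simple_graph_def)
qed (fact assms(4))

end
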